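(* Let $\kappa\in\mathbb{K}$, let $(\mathfrak{g},[-,-,-]_\mathfrak{g},\alpha_\mathfrak{g})$ and $(\mathfrak{h},[-,-,-]_\mathfrak{h},\alpha_\mathfrak{h})$ be regular Hom-Lie triple systems (i.e. $\alpha_\mathfrak{g},\alpha_\mathfrak{h}$ are bijective), $\theta$ an action of $\mathfrak{g}$ on $\mathfrak{h}$, and $\mathcal{A}:\mathfrak{h}\to\mathfrak{g}$ a $\kappa$-weighted $\mathcal{O}$-operator with respect to $\theta$. Let $a,b\in\mathfrak{g}$ satisfy $\alpha_\mathfrak{g}(a)=a$, $\alpha_\mathfrak{g}(b)=b$, and define $\Im(a,b):\mathfrak{h}\to\mathfrak{g}$ by $$\Im(a,b)v=\mathcal{A}\big(D(a,b)\alpha_\mathfrak{h}^{-1}(v)\big)-[a,b,\mathcal{A}\alpha_\mathfrak{h}^{-1}(v)]_\mathfrak{g}.$$ Then $\Im(a,b)$ is a 1-cocycle of the Hom-Lie triple system $(\mathfrak{h},\{-,-,-\}_\mathcal{A},\alpha_\mathfrak{h})$ with coefficients in $(\mathfrak{g},\alpha_\mathfrak{g};\theta_\mathcal{A})$; that is, $\alpha_\mathfrak{g}\circ\Im(a,b)=\Im(a,b)\circ\alpha_\mathfrak{h}$ and for all $v_1,v_2,v_3\in\mathfrak{h}$, $$\theta_\mathcal{A}(v_2,v_3)\Im(a,b)v_1-\theta_\mathcal{A}(v_1,v_3)\Im(a,b)v_2+D_\mathcal{A}(v_1,v_2)\Im(a,b)v_3-\Im(a,b)\{v_1,v_2,v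_3\}_\mathcal{A}=0.$$
   Context: All vector spaces are over a field $\mathbb{K}$ of characteristic zero. A Hom-Lie triple system $(\mathfrak{g},[-,-,-]_\mathfrak{g},\alpha_\mathfrak{g})$ is a vector space with a trilinear map $[-,-,-]_\mathfrak{g}$ and a linear map $\alpha_\mathfrak{g}$ with $\alpha_\mathfrak{g}([x,y,z]_\mathfrak{g})=[\alpha_\mathfrak{g}(x),\alpha_\mathfrak{g}(y),\alpha_\mathfrak{g}(z)]_\mathfrak{g}$ such that for all $x,y,z,a,b$: $[x,y,z]_\mathfrak{g}+[y,x,z]_\mathfrak{g}=0$; $[x,y,z]_\mathfrak{g}+[z,x,y]_\mathfrak{g}+[y,z,x]_\mathfrak{g}=0$; $[\alpha_\mathfrak{g}(a),\alpha_\mathfrak{g}(b),[x,y,z]_\mathfrak{g}]_\mathfrak{g}=[[a,b,x]_\mathfrak{g},\alpha_\mathfrak{g}(y),\alpha_\mathfrak{g}(z)]_\mathfrak{g}+[\alpha_\mathfrak{g}(x),[a,b,y]_\mathfrak{g},\alpha_\mathfrak{g}(z)]_\mathfrak{g}+[\alpha_\mathfrak{g}(x),\alpha_\mathfrak{g}(y),[a,b,z]_\mathfrak{g}]_\mathfrak{g}$. A representation of $\mathfrak{g}$ on $(V,\beta)$ is a bilinear map $\theta:\mathfrak{g}\times\mathfrak{g}\to\mathrm{End}(V)$ such that, with $D(x,y)=\theta(y,x)-\theta(x,y)$, for all $x,y,a,b$: $\theta(\alpha_\mathfrak{g}(x),\alpha_\mathfrak{g}(y))\circ\beta=\beta\circ\theta(x,y)$;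 $\theta(\alpha_\mathfrak{g}(a),\alpha_\mathfrak{g}(b))\theta(x,y)-\theta(\alpha_\mathfrak{g}(y),\alpha_\mathfrak{g}(b))\theta(x,a)-\theta(\alpha_\mathfrak{g}(x),[y,a,b]_\mathfrak{g})\circ\beta+D(\alpha_\mathfrak{g}(y),\alpha_\mathfrak{g}(a))\theta(x,b)=0$; $\theta(\alpha_\mathfrak{g}(a),\alpha_\mathfrak{g}(b))D(x,y)-D(\alpha_\mathfrak{g}(x),\alpha_\mathfrak{g}(y))\theta(a,b)+\theta([x,y,a]_\mathfrak{g},\alpha_\mathfrak{g}(b))\circ\beta+\theta(\alpha_\mathfrak{g}(a),[x,y,b]_\mathfrak{g})\circ\beta=0$. An action of $\mathfrak{g}$ on a Hom-Lie triple system $(\mathfrak{h},[-,-,-]_\mathfrak{h},\alpha_\mathfrak{h})$ is a representation $\theta$ of $\mathfrak{g}$ on $(\mathfrak{h},\alpha_\mathfrak{h})$ such that for all $x,y\in\mathfrak{g}$, $u,v,w\in\mathfrak{h}$: $\theta(\alpha_\mathfrak{g}(x),\alpha_\mathfrak{g}(y))[u,v,w]_\mathfrak{h}=[\theta(x,y)u,\alpha_\mathfrak{h}(v),\alpha_\mathfrak{h}(w)]_\mathfrak{h}+[\alpha_\mathfrak{h}(u),\theta(x,y)v,\alpha_\mathfrak{h}(w)]_\mathfrak{h}+[\alpha_\mathfrak{h}(u),\alpha_\mathfrak{h}(v),\theta(x,y)w]_\mathfrak{h}$ and $\theta(\alpha_\mathfrak{g}(x),\alpha_\mathfrak{g}(y))[u,v,w]_\mathfrak{h}=[\alpha_\mathfrak{h}(u),\alpha_\mathfrak{h}(v),\theta(x,y)w]_\mathfrak{h}=0$.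 A $\kappa$-weighted $\mathcal{O}$-operator from $\mathfrak{h}$ to $\mathfrak{g}$ with respect to $\theta$ is a linear map $\mathcal{A}:\mathfrak{h}\to\mathfrak{g}$ with $\mathcal{A}\circ\alpha_\mathfrak{h}=\alpha_\mathfrak{g}\circ\mathcal{A}$ and $[\mathcal{A}u,\mathcal{A}v,\mathcal{A}w]_\mathfrak{g}=\mathcal{A}\big(D(\mathcal{A}u,\mathcal{A}v)w-\theta(\mathcal{A}u,\mathcal{A}w)v+\theta(\mathcal{A}v,\mathcal{A}w)u+\kappa[u,v,w]_\mathfrak{h}\big)$. For such $\mathcal{A}$: $\{u,v,w\}_\mathcal{A}=D(\mathcal{A}u,\mathcal{A}v)w-\theta(\mathcal{A}u,\mathcal{A}w)v+\theta(\mathcal{A}v,\mathcal{A}w)u+\kappa[u,v,w]_\mathfrak{h}$ makes $(\mathfrak{h},\{-,-,-\}_\mathcal{A},\alpha_\mathfrak{h})$ a Hom-Lie triple system; $\theta_\mathcal{A}(u,v)(x)=[x,\mathcal{A}u,\mathcal{A}v]_\mathfrak{g}+\mathcal{A}(\theta(x,\mathcal{A}v)u-D(x,\mathcal{A}u)v)$ for $u,v\in\mathfrak{h}$, $x\in\mathfrak{g}$ defines a representation of it on $(\mathfrak{g},\alpha_\mathfrak{g})$, and $D_\mathcal{A}(u,v)=\theta_\mathcal{A}(v,u)-\theta_\mathcal{A}(u,v)$. *)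

theory Defs
  imports Main "HOL.Vector_Spaces"
begin

text \<open>Vector spaces over a field 'k of characteristic zero are modelled by a carrier type
  with additive group structure and an explicit scalar multiplication satisfying the
  Vector_Spaces locale vector_space.\<close>

definition trilinear ::
  "('k::field \<Rightarrow> 'a::ab_group_add \<Rightarrow> 'a) \<Rightarrow> ('k \<Rightarrow> 'b::ab_group_add \<Rightarrow> 'b) \<Rightarrow>
   ('a \<Rightarrow> 'a \<Rightarrow> 'a \<Rightarrow> 'b) \<Rightarrow> bool" where
  "trilinear s t br \<longleftrightarrow>
     (\<forall>y z. Vector_Spaces.linear s t (\<lambda>x. br x y z)) \<and>
     (\<forall>x z. Vector_Spaces.linear s t (\<lambda>y. br x y z)) \<and>
     (\<forall>x y. Vector_Spaces.linear s t (\<lambda>z. br x y z))"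

definition hom_LTS ::
  "('k::field \<Rightarrow> 'g::ab_group_add \<Rightarrow> 'g) \<Rightarrow> ('g \<Rightarrow> 'g \<Rightarrow> 'g \<Rightarrow> 'g) \<Rightarrow> ('g \<Rightarrow> 'g) \<Rightarrow> bool" where
  "hom_LTS s br \<alpha> \<longleftrightarrow>
     vector_space s \<and> trilinear s s br \<and> Vector_Spaces.linear s s \<alpha> \<and>
     (\<forall>x y z. \<alpha> (br x y z) = br (\<alpha> x) (\<alpha> y) (\<alpha> z)) \<and>
     (\<forall>x y z. br x y z + br y x z = 0) \<and>
     (\<forall>x y z. br x y z + br z x y + br y z x = 0) \<and>
     (\<forall>a b x y z. br (\<alpha> a) (\<alpha> b) (br x y z) =
         br (br a b x) (\<alpha> y) (\<alpha> z) + br (\<alpha> x) (br a b y) (\<alpha> z)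
         + br (\<alpha> x) (\<alpha> y) (br a b z))"

definition regular_hom_LTS ::
  "('k::field \<Rightarrow> 'g::ab_group_add \<Rightarrow> 'g) \<Rightarrow> ('g \<Rightarrow> 'g \<Rightarrow> 'g \<Rightarrow> 'g) \<Rightarrow> ('g \<Rightarrow> 'g) \<Rightarrow> bool" where
  "regular_hom_LTS s br \<alpha> \<longleftrightarrow> hom_LTS s br \<alpha> \<and> bij \<alpha>"

definition Dop :: "('g \<Rightarrow> 'g \<Rightarrow> 'v \<Rightarrow> 'v::ab_group_add) \<Rightarrow> 'g \<Rightarrow> 'g \<Rightarrow> 'v \<Rightarrow> 'v" where
  "Dop \<theta> x y = (\<lambda>v. \<theta> y x v - \<theta> x y v)"

definition hom_LTS_rep ::
  "('k::field \<Rightarrow> 'g::ab_group_add \<Rightarrow> 'g) \<Rightarrow> ('g \<Rightarrow> 'g \<Rightarrow> 'g \<Rightarrow> 'g) \<Rightarrow> ('g \<Rightarrow> 'g) \<Rightarrow>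
   ('k \<Rightarrow> 'v::ab_group_add \<Rightarrow> 'v) \<Rightarrow> ('v \<Rightarrow> 'v) \<Rightarrow> ('g \<Rightarrow> 'g \<Rightarrow> 'v \<Rightarrow> 'v) \<Rightarrow> bool" where
  "hom_LTS_rep s br \<alpha> sv \<beta> \<theta> \<longleftrightarrow>
     vector_space sv \<and> Vector_Spaces.linear sv sv \<beta> \<and>
     (\<forall>x y. Vector_Spaces.linear sv sv (\<theta> x y)) \<and>
     (\<forall>y v. Vector_Spaces.linear s sv (\<lambda>x. \<theta> x y v)) \<and>
     (\<forall>x v. Vector_Spaces.linear s sv (\<lambda>y. \<theta> x y v)) \<and>
     (\<forall>x y v. \<theta> (\<alpha> x) (\<alpha> y) (\<beta> v) = \<beta> (\<theta> x y v)) \<and>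
     (\<forall>a b x y v. \<theta> (\<alpha> a) (\<alpha> b) (\<theta> x y v)
        - \<theta> (\<alpha> y) (\<alpha> b) (\<theta> x a v)
        - \<theta> (\<alpha> x) (br y a b) (\<beta> v)
        + Dop \<theta> (\<alpha> y) (\<alpha> a) (\<theta> x b v) = 0) \<and>
     (\<forall>a b x y v. \<theta> (\<alpha> a) (\<alpha> b) (Dop \<theta> x y v)
        - Dop \<theta> (\<alpha> x) (\<alpha> y) (\<theta> a b v)
        + \<theta> (br x y a) (\<alpha> b) (\<beta> v)
        + \<theta> (\<alpha> a) (br x y b) (\<beta> v) = 0)"

text \<open>Action of g on the Hom-Lie triple system (h, brh, alpha_h). The second condition is
  the chain of equalities in the paper read literally: both equalities hold.\<close>
definition hom_LTS_action ::
  "('k::field \<Rightarrow> 'g::ab_group_add \<Rightarrow> 'g) \<Rightarrow> ('g \<Rightarrow> 'g \<Rightarrow> 'g \<Rightarrow> 'g) \<Rightarrow> ('g \<Rightarrow> 'g) \<Rightarrow>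
   ('k \<Rightarrow> 'h::ab_group_add \<Rightarrow> 'h) \<Rightarrow> ('h \<Rightarrow> 'h \<Rightarrow> 'h \<Rightarrow> 'h) \<Rightarrow> ('h \<Rightarrow> 'h) \<Rightarrow>
   ('g \<Rightarrow> 'g \<Rightarrow> 'h \<Rightarrow> 'h) \<Rightarrow> bool" where
  "hom_LTS_action s br \<alpha> sh brh \<alpha>h \<theta> \<longleftrightarrow>
     hom_LTS_rep s br \<alpha> sh \<alpha>h \<theta> \<and>
     (\<forall>x y u v w. \<theta> (\<alpha> x) (\<alpha> y) (brh u v w) =
        brh (\<theta> x y u) (\<alpha>h v) (\<alpha>h w) + brh (\<alpha>h u) (\<theta> x y v) (\<alpha>h w)
        + brh (\<alpha>h u) (\<alpha>h v) (\<theta> x y w)) \<and>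
     (\<forall>x y u v w. \<theta> (\<alpha> x) (\<alpha> y) (brh u v w) = brh (\<alpha>h u) (\<alpha>h v) (\<theta> x y w) \<and>
        brh (\<alpha>h u) (\<alpha>h v) (\<theta> x y w) = 0)"

definition Obr ::
  "('k::field \<Rightarrow> 'h::ab_group_add \<Rightarrow> 'h) \<Rightarrow> 'k \<Rightarrow> ('h \<Rightarrow> 'h \<Rightarrow> 'h \<Rightarrow> 'h) \<Rightarrow>
   ('g \<Rightarrow> 'g \<Rightarrow> 'h \<Rightarrow> 'h) \<Rightarrow> ('h \<Rightarrow> 'g) \<Rightarrow> 'h \<Rightarrow> 'h \<Rightarrow> 'h \<Rightarrow> 'h" where
  "Obr sh \<kappa> brh \<theta> A u v w =
     Dop \<theta> (A u) (A v) w - \<theta> (A u) (A w) v + \<theta> (A v) (A w) u + sh \<kappa> (brh u v w)"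

definition weighted_O_operator ::
  "('k::field \<Rightarrow> 'g::ab_group_add \<Rightarrow> 'g) \<Rightarrow> ('g \<Rightarrow> 'g \<Rightarrow> 'g \<Rightarrow> 'g) \<Rightarrow> ('g \<Rightarrow> 'g) \<Rightarrow>
   ('k \<Rightarrow> 'h::ab_group_add \<Rightarrow> 'h) \<Rightarrow> ('h \<Rightarrow> 'h \<Rightarrow> 'h \<Rightarrow> 'h) \<Rightarrow> ('h \<Rightarrow> 'h) \<Rightarrow>
   ('g \<Rightarrow> 'g \<Rightarrow> 'h \<Rightarrow> 'h) \<Rightarrow> 'k \<Rightarrow> ('h \<Rightarrow> 'g) \<Rightarrow> bool" where
  "weighted_O_operator s br \<alpha> sh brh \<alpha>h \<theta> \<kappa> A \<longleftrightarrow>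
     Vector_Spaces.linear sh s A \<and> A \<circ> \<alpha>h = \<alpha> \<circ> A \<and>
     (\<forall>u v w. br (A u) (A v) (A w) = A (Obr sh \<kappa> brh \<theta> A u v w))"

definition theta_A ::
  "('g \<Rightarrow> 'g \<Rightarrow> 'g \<Rightarrow> 'g::ab_group_add) \<Rightarrow> ('g \<Rightarrow> 'g \<Rightarrow> 'h \<Rightarrow> 'h::ab_group_add) \<Rightarrow> ('h \<Rightarrow> 'g) \<Rightarrow>
   'h \<Rightarrow> 'h \<Rightarrow> 'g \<Rightarrow> 'g" where
  "theta_A br \<theta> A u v = (\<lambda>x. br x (A u) (A v) + A (\<theta> x (A v) u - Dop \<theta> x (A u) v))"

definition D_A ::
  "('g \<Rightarrow> 'g \<Rightarrow> 'g \<Rightarrow> 'g::ab_group_add) \<Rightarrow> ('g \<Rightarrow> 'g \<Rightarrow> 'h \<Rightarrow> 'h::ab_group_add) \<Rightarrow> ('h \<Rightarrow> 'g) \<Rightarrow>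
   'h \<Rightarrow> 'h \<Rightarrow> 'g \<Rightarrow> 'g" where
  "D_A br \<theta> A u v = (\<lambda>x. theta_A br \<theta> A v u x - theta_A br \<theta> A u v x)"

definition Im_ab ::
  "('g \<Rightarrow> 'g \<Rightarrow> 'g \<Rightarrow> 'g::ab_group_add) \<Rightarrow> ('h \<Rightarrow> 'h) \<Rightarrow> ('g \<Rightarrow> 'g \<Rightarrow> 'h \<Rightarrow> 'h::ab_group_add) \<Rightarrow>
   ('h \<Rightarrow> 'g) \<Rightarrow> 'g \<Rightarrow> 'g \<Rightarrow> 'h \<Rightarrow> 'g" where
  "Im_ab br \<alpha>h \<theta> A a b = (\<lambda>v. A (Dop \<theta> a b (inv \<alpha>h v)) - br a b (A (inv \<alpha>h v)))"

end

theory Submission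
  imports Defs
begin

text \<open>Because \<open>\<alpha>\<close> fixes \<open>a\<close> and \<open>b\<close>, the maps \<open>L = [a, b, \<alpha>\<inverse>(-)]\<close> and
  \<open>M = D(a, b) \<alpha>\<^sub>h\<inverse>\<close> are derivations of \<open>g\<close> and of \<open>h\<close> (by the Hom-Lie and
  action axioms), and the representation axioms make the pair \<open>(L, M)\<close> compatible with
  \<open>\<theta>\<close>. Then \<open>Im(a, b) = A M - L A\<close>, and for every compatible pair the cocycle
  expression of \<open>A M - L A\<close> is the variation of the \<open>O\<close>-operator identity
  \<open>[Au, Av, Aw] = A{u, v, w}\<^sub>A\<close> in the direction \<open>A M - L A\<close>. Applying \<open>L\<close> to the
  identity and \<open>M\<close> to its right-hand side shows that this variation vanishes.\<close>

lemma trilinear_diff: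
  assumes "trilinear s t br"
  shows "br (x - x') y z = br x y z - br x' y z"
    and "br x (y - y') z = br x y z - br x y' z"
    and "br x y (z - z') = br x y z - br x y z'"
  using assms module_hom.diff[OF module_hom_linearI, of s t "\<lambda>x. br x y z" x x']
    module_hom.diff[OF module_hom_linearI, of s t "\<lambda>y. br x y z" y y']
    module_hom.diff[OF module_hom_linearI, of s t "br x y" z z']
  unfolding trilinear_def by simp_all

lemma linear_inv_bij:
  assumes lin: "Vector_Spaces.linear s s f" and "bij f"
  shows "Vector_Spaces.linear s s (inv f)"
proof -
  have f_inv: "f (inv f x) = x" for x
    using \<open>bij f\<close> by (simp add: bij_is_surj surj_f_inv_f)
  have inv_eq: "inv f y = x" if "f x = y" for x y
    using \<open>bij f\<close> that by (simp add: bij_is_inj inv_f_eq)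
  show ?thesis
    unfolding linear_iff
  proof (intro conjI allI)
    show "vector_space s" "vector_space s"
      using lin by (simp_all add: linear_iff)
    show "inv f (x + y) = inv f x + inv f y" for x y
      by (rule inv_eq) (simp add: module_hom.add[OF module_hom_linearI, OF lin] f_inv)
    show "inv f (s c x) = s c (inv f x)" for c x
      by (rule inv_eq) (simp add: module_hom.scale[OF module_hom_linearI, OF lin] f_inv)
  qed
qed

lemma linear_fun_diff:
  assumes "Vector_Spaces.linear s t f" and "Vector_Spaces.linear s t g"
  shows "Vector_Spaces.linear s t (\<lambda>x. f x - g x)"
  using assms unfolding linear_iff by (simp add: module.scale_right_diff_distrib module_iff_vector_space)

lemma hom_LTS_rep_diff:
  assumes "hom_LTS_rep s br \<alpha> sv \<beta> \<theta>"
  shows "\<theta> (x - x') y v = \<theta> x y v - \<theta> x' y v"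
    and "\<theta> x (y - y') v = \<theta> x y v - \<theta> x y' v"
  using assms module_hom.diff[OF module_hom_linearI, of s sv "\<lambda>x. \<theta> x y v" x x']
    module_hom.diff[OF module_hom_linearI, of s sv "\<lambda>y. \<theta> x y v" y y']
  unfolding hom_LTS_rep_def by simp_all

definition ternary_derivation :: "('a \<Rightarrow> 'a \<Rightarrow> 'a \<Rightarrow> 'a::plus) \<Rightarrow> ('a \<Rightarrow> 'a) \<Rightarrow> bool" where
  "ternary_derivation br d \<longleftrightarrow>
     (\<forall>x y z. d (br x y z) = br (d x) y z + br x (d y) z + br x y (d z))"

definition compatible_pair ::
  "('g \<Rightarrow> 'g \<Rightarrow> 'v \<Rightarrow> 'v::plus) \<Rightarrow> ('g \<Rightarrow> 'g) \<Rightarrow> ('v \<Rightarrow> 'v) \<Rightarrow> bool" where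
  "compatible_pair \<theta> L M \<longleftrightarrow>
     (\<forall>x y v. M (\<theta> x y v) = \<theta> x y (M v) + \<theta> (L x) y v + \<theta> x (L y) v)"

text \<open>The variations of \<open>[Au, Av, Aw]\<close> and of the \<open>\<theta>\<close>-part of \<open>{u, v, w}\<^sub>A\<close>
  when \<open>A\<close> is moved in the direction \<open>B\<close>.\<close>

definition br_variation ::
  "('g \<Rightarrow> 'g \<Rightarrow> 'g \<Rightarrow> 'g::plus) \<Rightarrow> ('h \<Rightarrow> 'g) \<Rightarrow> ('h \<Rightarrow> 'g) \<Rightarrow> 'h \<Rightarrow> 'h \<Rightarrow> 'h \<Rightarrow> 'g" where
  "br_variation br A B u v w = br (B u) (A v) (A w) + br (A u) (B v) (A w) + br (A u) (A v) (B w)"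

definition theta_variation ::
  "('g \<Rightarrow> 'g \<Rightarrow> 'h \<Rightarrow> 'h::ab_group_add) \<Rightarrow> ('h \<Rightarrow> 'g) \<Rightarrow> ('h \<Rightarrow> 'g) \<Rightarrow> 'h \<Rightarrow> 'h \<Rightarrow> 'h \<Rightarrow> 'h" where
  "theta_variation \<theta> A B u v w =
     Dop \<theta> (B u) (A v) w + Dop \<theta> (A u) (B v) w - \<theta> (B u) (A w) v - \<theta> (A u) (B w) v
     + \<theta> (B v) (A w) u + \<theta> (A v) (B w) u"

lemma cocycle_expr_eq_variations:
  assumes skew: "\<And>x y z. br x y z + br y x z = 0"
    and cyclic: "\<And>x y z. br x y z + br z x y + br y z x = 0"
    and A: "Vector_Spaces.linear sh s A"
  shows "theta_A br \<theta> A v2 v3 (B v1) - theta_A br \<theta> A v1 v3 (B v2) + D_A br \<theta> A v1 v2 (B v3)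
    = br_variation br A B v1 v2 v3 - A (theta_variation \<theta> A B v1 v2 v3)"
proof -
  have A_add: "A (x + y) = A x + A y" for x y
    using A by (simp add: linear_iff)
  have A_diff: "A (x - y) = A x - A y" for x y
    using A by (rule module_hom.diff[OF module_hom_linearI])
  have swap12: "br (B v2) (A v1) (A v3) = - br (A v1) (B v2) (A v3)"
    using skew by (simp add: eq_neg_iff_add_eq_0)
  have swap3: "br (B v3) (A v2) (A v1) - br (B v3) (A v1) (A v2) = br (A v1) (A v2) (B v3)"
  proof -
    have "br (A v2) (B v3) (A v1) = - br (B v3) (A v2) (A v1)"
      using skew by (simp add: eq_neg_iff_add_eq_0)
    with cyclic[of "A v1" "A v2" "B v3"] show ?thesis
      by (simp add: algebra_simps add_eq_0_iff)
  qed
  show ?thesis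
    unfolding theta_A_def D_A_def br_variation_def theta_variation_def Dop_def
    by (simp add: A_add A_diff swap12 swap3[symmetric] algebra_simps)
qed

lemma br_variation_diff:
  assumes "trilinear s s br"
  shows "br_variation br A (\<lambda>x. B x - C x) u v w = br_variation br A B u v w - br_variation br A C u v w"
  unfolding br_variation_def by (simp add: trilinear_diff[OF assms] algebra_simps)

lemma theta_variation_diff:
  assumes "hom_LTS_rep s br \<alpha> sv \<beta> \<theta>"
  shows "theta_variation \<theta> A (\<lambda>x. B x - C x) u v w
    = theta_variation \<theta> A B u v w - theta_variation \<theta> A C u v w"
  unfolding theta_variation_def Dop_def by (simp add: hom_LTS_rep_diff[OF assms] algebra_simps)

lemma Obr_Leibniz:
  assumes M: "Vector_Spaces.linear sh sh M" and der: "ternary_derivation brh M"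
    and compat: "compatible_pair \<theta> L M"
  shows "Obr sh \<kappa> brh \<theta> A (M u) v w + Obr sh \<kappa> brh \<theta> A u (M v) w + Obr sh \<kappa> brh \<theta> A u v (M w)
    = M (Obr sh \<kappa> brh \<theta> A u v w) + theta_variation \<theta> A (\<lambda>x. A (M x)) u v w
      - theta_variation \<theta> A (\<lambda>x. L (A x)) u v w"
proof -
  have M_add: "M (x + y) = M x + M y" and M_scale: "M (sh c x) = sh c (M x)"
    and scale_add: "sh c (x + y) = sh c x + sh c y" for x y c
    using M by (simp_all add: linear_iff vector_space.vector_space_assms(1))
  have M_diff: "M (x - y) = M x - M y" for x y
    using M by (rule module_hom.diff[OF module_hom_linearI])
  show ?thesis
    using der compat
    unfolding Obr_def theta_variation_def Dop_def ternary_derivation_def compatible_pair_def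
    by (simp add: M_add M_diff M_scale scale_add algebra_simps)
qed

lemma cocycle_of_compatible_derivations:
  assumes g: "hom_LTS s br \<alpha>" and rep: "hom_LTS_rep s br \<alpha> sh \<alpha>h \<theta>"
    and O: "weighted_O_operator s br \<alpha> sh brh \<alpha>h \<theta> \<kappa> A"
    and L: "ternary_derivation br L"
    and M: "Vector_Spaces.linear sh sh M" "ternary_derivation brh M"
    and compat: "compatible_pair \<theta> L M"
  defines "I \<equiv> \<lambda>v. A (M v) - L (A v)"
  shows "theta_A br \<theta> A v2 v3 (I v1) - theta_A br \<theta> A v1 v3 (I v2) + D_A br \<theta> A v1 v2 (I v3)
    - I (Obr sh \<kappa> brh \<theta> A v1 v2 v3) = 0"
proof -
  let ?Ob = "Obr sh \<kappa> brh \<theta> A v1 v2 v3"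
  let ?AM = "\<lambda>x. A (M x)" and ?LA = "\<lambda>x. L (A x)"
  have A: "Vector_Spaces.linear sh s A"
    and O_id: "\<And>u v w. br (A u) (A v) (A w) = A (Obr sh \<kappa> brh \<theta> A u v w)"
    using O unfolding weighted_O_operator_def by blast+
  have A_add: "A (x + y) = A x + A y" for x y
    using A by (simp add: linear_iff)
  have A_diff: "A (x - y) = A x - A y" for x y
    using A by (rule module_hom.diff[OF module_hom_linearI])
  have tri: "trilinear s s br"
    and skew: "\<And>x y z. br x y z + br y x z = 0"
    and cyclic: "\<And>x y z. br x y z + br z x y + br y z x = 0"
    using g unfolding hom_LTS_def by blast+
  have br_AM: "br_variation br A ?AM v1 v2 v3
      = A (M ?Ob + theta_variation \<theta> A ?AM v1 v2 v3 - theta_variation \<theta> A ?LA v1 v2 v3)"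
    unfolding br_variation_def O_id Obr_Leibniz[OF M compat, symmetric] by (simp add: A_add)
  have br_LA: "br_variation br A ?LA v1 v2 v3 = L (A ?Ob)"
    using L unfolding br_variation_def ternary_derivation_def O_id[symmetric] by simp
  have "theta_A br \<theta> A v2 v3 (I v1) - theta_A br \<theta> A v1 v3 (I v2) + D_A br \<theta> A v1 v2 (I v3)
      = br_variation br A I v1 v2 v3 - A (theta_variation \<theta> A I v1 v2 v3)"
    using skew cyclic A by (rule cocycle_expr_eq_variations)
  also have "\<dots> = A (M ?Ob) - L (A ?Ob)"
    unfolding I_def br_variation_diff[OF tri] theta_variation_diff[OF rep] br_AM br_LA
    by (simp add: A_add A_diff)
  finally show ?thesis
    unfolding I_def by simp
qed

definition ad_twisted :: "('g \<Rightarrow> 'g \<Rightarrow> 'g \<Rightarrow> 'g) \<Rightarrow> ('g \<Rightarrow> 'g) \<Rightarrow> 'g \<Rightarrow> 'g \<Rightarrow> 'g \<Rightarrow> 'g" where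
  "ad_twisted br \<alpha> a b = (\<lambda>x. br a b (inv \<alpha> x))"

definition D_twisted ::
  "('g \<Rightarrow> 'g \<Rightarrow> 'h \<Rightarrow> 'h::ab_group_add) \<Rightarrow> ('h \<Rightarrow> 'h) \<Rightarrow> 'g \<Rightarrow> 'g \<Rightarrow> 'h \<Rightarrow> 'h" where
  "D_twisted \<theta> \<alpha>h a b = (\<lambda>v. Dop \<theta> a b (inv \<alpha>h v))"

lemma inv_preserves_bracket:
  assumes "bij \<alpha>" and hom: "\<And>x y z. \<alpha> (br x y z) = br (\<alpha> x) (\<alpha> y) (\<alpha> z)"
  shows "inv \<alpha> (br x y z) = br (inv \<alpha> x) (inv \<alpha> y) (inv \<alpha> z)"
  by (rule inv_f_eq[OF bij_is_inj[OF \<open>bij \<alpha>\<close>]])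
    (simp add: hom surj_f_inv_f[OF bij_is_surj[OF \<open>bij \<alpha>\<close>]])

lemma ternary_derivation_ad_twisted:
  assumes g: "hom_LTS s br \<alpha>" and "bij \<alpha>" and fixed: "\<alpha> a = a" "\<alpha> b = b"
  shows "ternary_derivation br (ad_twisted br \<alpha> a b)"
proof -
  have hom: "\<And>x y z. \<alpha> (br x y z) = br (\<alpha> x) (\<alpha> y) (\<alpha> z)"
    and der: "\<And>a b x y z. br (\<alpha> a) (\<alpha> b) (br x y z) =
         br (br a b x) (\<alpha> y) (\<alpha> z) + br (\<alpha> x) (br a b y) (\<alpha> z) + br (\<alpha> x) (\<alpha> y) (br a b z)"
    using g unfolding hom_LTS_def by blast+
  have \<alpha>_inv: "\<alpha> (inv \<alpha> x) = x" for x
    using \<open>bij \<alpha>\<close> by (simp add: bij_is_surj surj_f_inv_f)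
  show ?thesis
    unfolding ternary_derivation_def ad_twisted_def
      inv_preserves_bracket[of \<alpha> br, OF \<open>bij \<alpha>\<close> hom]
    using der[of a b] by (simp add: fixed \<alpha>_inv)
qed

lemma compatible_pair_twisted:
  assumes rep: "hom_LTS_rep s br \<alpha> sh \<alpha>h \<theta>" and "bij \<alpha>" "bij \<alpha>h"
    and fixed: "\<alpha> a = a" "\<alpha> b = b"
  shows "compatible_pair \<theta> (ad_twisted br \<alpha> a b) (D_twisted \<theta> \<alpha>h a b)"
proof -
  have equiv: "\<And>x y v. \<theta> (\<alpha> x) (\<alpha> y) (\<alpha>h v) = \<alpha>h (\<theta> x y v)"
    and rep3: "\<And>a b x y v. \<theta> (\<alpha> a) (\<alpha> b) (Dop \<theta> x y v) - Dop \<theta> (\<alpha> x) (\<alpha> y) (\<theta> a b v)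
        + \<theta> (br x y a) (\<alpha> b) (\<alpha>h v) + \<theta> (\<alpha> a) (br x y b) (\<alpha>h v) = 0"
    using rep unfolding hom_LTS_rep_def by blast+
  have \<alpha>_inv: "\<alpha> (inv \<alpha> x) = x" and \<alpha>h_inv: "\<alpha>h (inv \<alpha>h v) = v" for x v
    using \<open>bij \<alpha>\<close> \<open>bij \<alpha>h\<close> by (simp_all add: bij_is_surj surj_f_inv_f)
  have inv_\<theta>: "inv \<alpha>h (\<theta> x y v) = \<theta> (inv \<alpha> x) (inv \<alpha> y) (inv \<alpha>h v)" for x y v
    using \<open>bij \<alpha>h\<close> by (intro inv_f_eq) (simp_all add: bij_is_inj equiv[symmetric] \<alpha>_inv \<alpha>h_inv)
  show ?thesis
    unfolding compatible_pair_def ad_twisted_def D_twisted_def inv_\<theta>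
  proof (intro allI)
    fix x y v
    show "Dop \<theta> a b (\<theta> (inv \<alpha> x) (inv \<alpha> y) (inv \<alpha>h v))
      = \<theta> x y (Dop \<theta> a b (inv \<alpha>h v)) + \<theta> (br a b (inv \<alpha> x)) y v + \<theta> x (br a b (inv \<alpha> y)) v"
      using rep3[of "inv \<alpha> x" "inv \<alpha> y" a b "inv \<alpha>h v"]
      by (simp add: fixed \<alpha>_inv \<alpha>h_inv algebra_simps)
  qed
qed

lemma ternary_derivation_D_twisted:
  assumes act: "hom_LTS_action s br \<alpha> sh brh \<alpha>h \<theta>" and h: "hom_LTS sh brh \<alpha>h" "bij \<alpha>h"
    and fixed: "\<alpha> a = a" "\<alpha> b = b"
  shows "ternary_derivation brh (D_twisted \<theta> \<alpha>h a b)"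
proof -
  have act1: "\<And>x y u v w. \<theta> (\<alpha> x) (\<alpha> y) (brh u v w) =
        brh (\<theta> x y u) (\<alpha>h v) (\<alpha>h w) + brh (\<alpha>h u) (\<theta> x y v) (\<alpha>h w) + brh (\<alpha>h u) (\<alpha>h v) (\<theta> x y w)"
    using act unfolding hom_LTS_action_def by blast
  have tri: "trilinear sh sh brh" and hom: "\<And>x y z. \<alpha>h (brh x y z) = brh (\<alpha>h x) (\<alpha>h y) (\<alpha>h z)"
    using h(1) unfolding hom_LTS_def by blast+
  have \<alpha>h_inv: "\<alpha>h (inv \<alpha>h v) = v" for v
    using \<open>bij \<alpha>h\<close> by (simp add: bij_is_surj surj_f_inv_f)
  have act_inv: "\<theta> x y (inv \<alpha>h (brh u v w)) = brh (\<theta> x y (inv \<alpha>h u)) v w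
      + brh u (\<theta> x y (inv \<alpha>h v)) w + brh u v (\<theta> x y (inv \<alpha>h w))"
    if "x \<in> {a, b}" "y \<in> {a, b}" for x y u v w
    using act1[of x y "inv \<alpha>h u" "inv \<alpha>h v" "inv \<alpha>h w"] that
    by (auto simp: fixed \<alpha>h_inv inv_preserves_bracket[of \<alpha>h brh, OF \<open>bij \<alpha>h\<close> hom])
  show ?thesis
    unfolding ternary_derivation_def D_twisted_def Dop_def
    by (simp add: act_inv trilinear_diff[OF tri])
qed

lemma linear_ad_twisted:
  assumes g: "hom_LTS s br \<alpha>" and "bij \<alpha>"
  shows "Vector_Spaces.linear s s (ad_twisted br \<alpha> a b)"
proof -
  have "Vector_Spaces.linear s s \<alpha>" and lin_br: "Vector_Spaces.linear s s (br a b)"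
    using g unfolding hom_LTS_def trilinear_def by blast+
  then have "Vector_Spaces.linear s s (br a b \<circ> inv \<alpha>)"
    using linear_inv_bij \<open>bij \<alpha>\<close> Vector_Spaces.linear_compose by blast
  then show ?thesis
    by (simp add: ad_twisted_def comp_def)
qed

lemma linear_D_twisted:
  assumes rep: "hom_LTS_rep s br \<alpha> sh \<alpha>h \<theta>" and "bij \<alpha>h"
  shows "Vector_Spaces.linear sh sh (D_twisted \<theta> \<alpha>h a b)"
proof -
  have "Vector_Spaces.linear sh sh \<alpha>h" and lin_\<theta>: "\<And>x y. Vector_Spaces.linear sh sh (\<theta> x y)"
    using rep unfolding hom_LTS_rep_def by blast+
  moreover have "Vector_Spaces.linear sh sh (Dop \<theta> a b)"
    unfolding Dop_def by (intro linear_fun_diff lin_\<theta>)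
  ultimately have "Vector_Spaces.linear sh sh (Dop \<theta> a b \<circ> inv \<alpha>h)"
    using linear_inv_bij \<open>bij \<alpha>h\<close> Vector_Spaces.linear_compose by blast
  then show ?thesis
    by (simp add: D_twisted_def comp_def)
qed

lemma Im_ab_eq:
  assumes comm: "A \<circ> \<alpha>h = \<alpha> \<circ> A" and "bij \<alpha>" "bij \<alpha>h"
  shows "Im_ab br \<alpha>h \<theta> A a b = (\<lambda>v. A (D_twisted \<theta> \<alpha>h a b v) - ad_twisted br \<alpha> a b (A v))"
proof -
  have "A (inv \<alpha>h v) = inv \<alpha> (A v)" for v
  proof (rule inv_f_eq[OF bij_is_inj[OF \<open>bij \<alpha>\<close>], symmetric])
    show "\<alpha> (A (inv \<alpha>h v)) = A v"
      using comm surj_f_inv_f[OF bij_is_surj[OF \<open>bij \<alpha>h\<close>]] by (metis comp_apply)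
  qed
  then show ?thesis
    unfolding Im_ab_def D_twisted_def ad_twisted_def by simp
qed

lemma linear_Im_ab:
  assumes g: "hom_LTS s br \<alpha>" "bij \<alpha>" and rep: "hom_LTS_rep s br \<alpha> sh \<alpha>h \<theta>" "bij \<alpha>h"
    and O: "weighted_O_operator s br \<alpha> sh brh \<alpha>h \<theta> \<kappa> A"
  shows "Vector_Spaces.linear sh s (Im_ab br \<alpha>h \<theta> A a b)"
proof -
  have A: "Vector_Spaces.linear sh s A" and comm: "A \<circ> \<alpha>h = \<alpha> \<circ> A"
    using O unfolding weighted_O_operator_def by blast+
  have "Vector_Spaces.linear sh s (A \<circ> D_twisted \<theta> \<alpha>h a b)"
    using linear_D_twisted[OF rep] A by (rule Vector_Spaces.linear_compose)
  moreover have "Vector_Spaces.linear sh s (ad_twisted br \<alpha> a b \<circ> A)"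
    using A linear_ad_twisted[OF g] by (rule Vector_Spaces.linear_compose)
  ultimately show ?thesis
    unfolding Im_ab_eq[OF comm g(2) rep(2)] comp_def by (rule linear_fun_diff)
qed

lemma Im_ab_commute:
  assumes g: "hom_LTS s br \<alpha>" and rep: "hom_LTS_rep s br \<alpha> sh \<alpha>h \<theta>" and "bij \<alpha>h"
    and comm: "A \<circ> \<alpha>h = \<alpha> \<circ> A" and fixed: "\<alpha> a = a" "\<alpha> b = b"
  shows "\<alpha> \<circ> Im_ab br \<alpha>h \<theta> A a b = Im_ab br \<alpha>h \<theta> A a b \<circ> \<alpha>h"
proof
  fix v
  have lin_\<alpha>: "Vector_Spaces.linear s s \<alpha>"
    and hom: "\<And>x y z. \<alpha> (br x y z) = br (\<alpha> x) (\<alpha> y) (\<alpha> z)"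
    using g unfolding hom_LTS_def by blast+
  have lin_\<alpha>h: "Vector_Spaces.linear sh sh \<alpha>h"
    and equiv: "\<And>x y v. \<theta> (\<alpha> x) (\<alpha> y) (\<alpha>h v) = \<alpha>h (\<theta> x y v)"
    using rep unfolding hom_LTS_rep_def by blast+
  have A_\<alpha>h: "A (\<alpha>h u) = \<alpha> (A u)" for u
    using comm by (metis comp_apply)
  have \<alpha>h_inv: "\<alpha>h (inv \<alpha>h u) = u" and inv_\<alpha>h: "inv \<alpha>h (\<alpha>h u) = u" for u
    using \<open>bij \<alpha>h\<close> by (simp_all add: bij_is_surj surj_f_inv_f bij_is_inj)
  have \<alpha>h_Dop: "\<alpha>h (Dop \<theta> a b u) = Dop \<theta> a b (\<alpha>h u)" for u
    using equiv[of b a u] equiv[of a b u]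
    by (simp add: Dop_def fixed module_hom.diff[OF module_hom_linearI, OF lin_\<alpha>h])
  show "(\<alpha> \<circ> Im_ab br \<alpha>h \<theta> A a b) v = (Im_ab br \<alpha>h \<theta> A a b \<circ> \<alpha>h) v"
    by (simp add: Im_ab_def module_hom.diff[OF module_hom_linearI, OF lin_\<alpha>] hom fixed
        A_\<alpha>h[symmetric] \<alpha>h_Dop \<alpha>h_inv inv_\<alpha>h)
qed

theorem mainTheorem5:
  fixes s :: "'k::field_char_0 \<Rightarrow> 'g::ab_group_add \<Rightarrow> 'g"
    and sh :: "'k \<Rightarrow> 'h::ab_group_add \<Rightarrow> 'h"
    and br :: "'g \<Rightarrow> 'g \<Rightarrow> 'g \<Rightarrow> 'g" and \<alpha> :: "'g \<Rightarrow> 'g"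
    and brh :: "'h \<Rightarrow> 'h \<Rightarrow> 'h \<Rightarrow> 'h" and \<alpha>h :: "'h \<Rightarrow> 'h"
    and \<theta> :: "'g \<Rightarrow> 'g \<Rightarrow> 'h \<Rightarrow> 'h" and \<kappa> :: 'k and A :: "'h \<Rightarrow> 'g" and a b :: 'g
  assumes "regular_hom_LTS s br \<alpha>"
    and "regular_hom_LTS sh brh \<alpha>h"
    and "hom_LTS_action s br \<alpha> sh brh \<alpha>h \<theta>"
    and "weighted_O_operator s br \<alpha> sh brh \<alpha>h \<theta> \<kappa> A"
    and "\<alpha> a = a" and "\<alpha> b = b"
  shows "Vector_Spaces.linear sh s (Im_ab br \<alpha>h \<theta> A a b)
    \<and> \<alpha> \<circ> Im_ab br \<alpha>h \<theta> A a b = Im_ab br \<alpha>h \<theta> A a b \<circ> \<alpha>h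
    \<and> (\<forall>v1 v2 v3.
         theta_A br \<theta> A v2 v3 (Im_ab br \<alpha>h \<theta> A a b v1)
       - theta_A br \<theta> A v1 v3 (Im_ab br \<alpha>h \<theta> A a b v2)
       + D_A br \<theta> A v1 v2 (Im_ab br \<alpha>h \<theta> A a b v3)
       - Im_ab br \<alpha>h \<theta> A a b (Obr sh \<kappa> brh \<theta> A v1 v2 v3) = 0)"
proof -
  have g: "hom_LTS s br \<alpha>" "bij \<alpha>" and h: "hom_LTS sh brh \<alpha>h" "bij \<alpha>h"
    using assms(1,2) unfolding regular_hom_LTS_def by blast+
  have rep: "hom_LTS_rep s br \<alpha> sh \<alpha>h \<theta>"
    using assms(3) unfolding hom_LTS_action_def by blast
  have comm: "A \<circ> \<alpha>h = \<alpha> \<circ> A"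
    using assms(4) unfolding weighted_O_operator_def by blast
  have cocycle: "theta_A br \<theta> A v2 v3 (Im_ab br \<alpha>h \<theta> A a b v1)
       - theta_A br \<theta> A v1 v3 (Im_ab br \<alpha>h \<theta> A a b v2)
       + D_A br \<theta> A v1 v2 (Im_ab br \<alpha>h \<theta> A a b v3)
       - Im_ab br \<alpha>h \<theta> A a b (Obr sh \<kappa> brh \<theta> A v1 v2 v3) = 0" for v1 v2 v3
    unfolding Im_ab_eq[OF comm g(2) h(2)]
    using cocycle_of_compatible_derivations[OF g(1) rep assms(4)
        ternary_derivation_ad_twisted[OF g assms(5,6)] linear_D_twisted[OF rep h(2)] ternary_derivation_D_twisted[OF assms(3) h assms(5,6)]
        compatible_pair_twisted[OF rep g(2) h(2) assms(5,6)]] .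
  show ?thesis
    using linear_Im_ab[OF g rep h(2) assms(4)] Im_ab_commute[OF g(1) rep h(2) comm assms(5,6)]
      cocycle by blast
qed

end
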